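(* Let $p$ have a habit formation logit representation $(v,c)$ and let $x\in X\setminus\{o\}$. The standard logit estimator $\hat v(x)=\log\left(\frac{p(x,\{x,o\})}{p(o,\{x,o\})}\right)$ is unbiased, i.e. $\hat v(x)=v(x)$, if and only if $c(x)=0$.
   Context: $X$ is a finite set containing an outside option $o$; choice sets are subsets of $X$ containing $o$. Given $v:X\to\mathbb{R}$ and $c:X\to\mathbb{R}_{\ge0}$ with $v(o)=c(o)=0$, for each choice set $A$ define the Markov chain on $A$ with transition probabilities from $y$ to $x$ equal to $\frac{e^{v(x)+c(x)\mathbf{1}\{x=y\}}}{\sum_{z\in A}e^{v(z)+c(z)\mathbf{1}\{z=y\}}}$. A random choice rule $p$ has a habit formation logit representation $(v,c)$ if for each choice set $A$, $p(\cdot,A)$ is the stationary distribution of this chain. *)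

theory Defs
  imports Complex_Main
begin

definition choice_sets :: "'a set \<Rightarrow> 'a \<Rightarrow> 'a set set" where
  "choice_sets X oo = {A. A \<subseteq> X \<and> oo \<in> A}"

definition random_choice_rule :: "'a set \<Rightarrow> 'a \<Rightarrow> ('a \<Rightarrow> 'a set \<Rightarrow> real) \<Rightarrow> bool" where
  "random_choice_rule X oo p \<longleftrightarrow>
     (\<forall>A\<in>choice_sets X oo. (\<forall>x. p x A \<ge> 0) \<and> (\<forall>x. x \<notin> A \<longrightarrow> p x A = 0)
        \<and> (\<Sum>x\<in>A. p x A) = 1)"

definition hf_trans :: "('a \<Rightarrow> real) \<Rightarrow> ('a \<Rightarrow> real) \<Rightarrow> 'a set \<Rightarrow> 'a \<Rightarrow> 'a \<Rightarrow> real" where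
  "hf_trans v c A y x =
     exp (v x + c x * (if x = y then 1 else 0)) /
     (\<Sum>z\<in>A. exp (v z + c z * (if z = y then 1 else 0)))"

definition is_stationary :: "('a \<Rightarrow> 'a \<Rightarrow> real) \<Rightarrow> 'a set \<Rightarrow> ('a \<Rightarrow> real) \<Rightarrow> bool" where
  "is_stationary P A q \<longleftrightarrow>
     (\<forall>x\<in>A. q x \<ge> 0) \<and> (\<Sum>x\<in>A. q x) = 1 \<and>
     (\<forall>x\<in>A. (\<Sum>y\<in>A. q y * P y x) = q x)"

definition habit_logit_rep ::
  "'a set \<Rightarrow> 'a \<Rightarrow> ('a \<Rightarrow> 'a set \<Rightarrow> real) \<Rightarrow> ('a \<Rightarrow> real) \<Rightarrow> ('a \<Rightarrow> real) \<Rightarrow> bool" where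
  "habit_logit_rep X oo p v c \<longleftrightarrow>
     v oo = 0 \<and> c oo = 0 \<and> (\<forall>x\<in>X. c x \<ge> 0) \<and>
     (\<forall>A\<in>choice_sets X oo. is_stationary (hf_trans v c A) A (\<lambda>x. p x A))"

end

theory Submission
  imports Defs
begin

text \<open>On a binary menu {x, o} the habit formation chain has only two states, so its
  stationary distribution satisfies detailed balance: the odds p(x)/p(o) equal the ratio
  P(o to x) / P(x to o) = exp(v x) (1 + exp(v x + c x)) / (1 + exp(v x)).
  The habit term thus inflates the logit odds exp(v x) by a factor that is 1 exactly
  when c x = 0.\<close>

lemma sum_hf_trans:
  assumes "finite A" and "A \<noteq> {}"
  shows "(\<Sum>x\<in>A. hf_trans v c A y x) = 1"
proof -
  have "(\<Sum>z\<in>A. exp (v z + c z * (if z = y then 1 else 0))) > 0"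
    using assms by (intro sum_pos) auto
  then show ?thesis
    unfolding hf_trans_def sum_divide_distrib[symmetric] by simp
qed

lemma stationary_two_state_balance:
  assumes "is_stationary P {a, b} q" and "a \<noteq> b" and "P a a + P a b = 1"
  shows "q a * P a b = q b * P b a"
proof -
  have "q a * P a a + q b * P b a = q a"
    using assms(1,2) by (simp add: is_stationary_def)
  moreover have "q a * P a b = q a * (1 - P a a)"
    using assms(3) by simp
  ultimately show ?thesis
    by (simp add: right_diff_distrib)
qed

lemma stationary_two_state_odds:
  assumes "is_stationary P {a, b} q" and "a \<noteq> b" and "P a a + P a b = 1"
    and "P a b > 0" and "P b a > 0"
  shows "q a / q b = P b a / P a b"
proof -
  have balance: "q a * P a b = q b * P b a"
    using assms(1-3) by (rule stationary_two_state_balance)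
  have "q b \<noteq> 0"
  proof
    assume "q b = 0"
    with balance assms(4) have "q a = 0" by simp
    with \<open>q b = 0\<close> assms(1,2) show False by (simp add: is_stationary_def)
  qed
  with balance assms(4) show ?thesis
    by (simp add: field_simps)
qed

lemma hf_trans_binary:
  assumes "x \<noteq> oo" and "v oo = 0" and "c oo = 0"
  shows "hf_trans v c {x, oo} oo x = exp (v x) / (1 + exp (v x))"
    and "hf_trans v c {x, oo} x oo = 1 / (exp (v x + c x) + 1)"
    and "hf_trans v c {x, oo} x x + hf_trans v c {x, oo} x oo = 1"
  using assms sum_hf_trans[of "{x, oo}" v c x] by (simp_all add: hf_trans_def)

lemma ln_habit_odds_eq_iff:
  fixes v c :: real
  shows "ln (exp v * (1 + exp (v + c)) / (1 + exp v)) = v \<longleftrightarrow> c = 0"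
proof -
  have pos: "1 + exp (v + c) > 0" "1 + exp v > 0"
    by (simp_all add: add_pos_pos)
  have "ln (exp v * (1 + exp (v + c)) / (1 + exp v))
      = v + ln ((1 + exp (v + c)) / (1 + exp v))"
    using pos by (simp add: ln_mult ln_div)
  also have "\<dots> = v \<longleftrightarrow> (1 + exp (v + c)) / (1 + exp v) = 1"
    using pos by simp
  also have "\<dots> \<longleftrightarrow> exp (v + c) = exp v"
    using pos by simp
  also have "\<dots> \<longleftrightarrow> c = 0"
    by simp
  finally show ?thesis .
qed

theorem proposition5:
  fixes X :: "'a set" and oo x :: 'a
    and p :: "'a \<Rightarrow> 'a set \<Rightarrow> real" and v c :: "'a \<Rightarrow> real"
  assumes "finite X" and "oo \<in> X"
    and "random_choice_rule X oo p"
    and "habit_logit_rep X oo p v c"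
    and "x \<in> X - {oo}"
  shows "ln (p x {x, oo} / p oo {x, oo}) = v x \<longleftrightarrow> c x = 0"
proof -
  \<comment> \<open>Stationarity alone pins down p on the menu.\<close>
  have x: "x \<noteq> oo" "x \<in> X" using assms(5) by auto
  have "{x, oo} \<in> choice_sets X oo" using x assms(2) by (simp add: choice_sets_def)
  with assms(4)
  have stationary: "is_stationary (hf_trans v c {x, oo}) {x, oo} (\<lambda>y. p y {x, oo})"
    and "v oo = 0" "c oo = 0"
    by (auto simp: habit_logit_rep_def)
  note trans = hf_trans_binary[where v = v and c = c, OF x(1) \<open>v oo = 0\<close> \<open>c oo = 0\<close>]
  have "p x {x, oo} / p oo {x, oo} = exp (v x) * (1 + exp (v x + c x)) / (1 + exp (v x))"
    using stationary_two_state_odds[OF stationary x(1) trans(3)] trans(1,2)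
    by (simp add: add_pos_pos add.commute)
  then show ?thesis
    by (simp add: ln_habit_odds_eq_iff)
qed

end
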